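(* Fix $\beta>2$ and $r>0$, and let $G_\beta,H_\beta,K_\beta,g_\beta$, $r_1^\beta$ and $F_\beta(\mathbf{x},r)$ be as in the context. The equation $$K_\beta(y-3r/2)+H_\beta(y)+K_\beta(y)=1,\qquad y\in(-\infty,g_\beta],$$ has a unique solution $y_1^\beta(r)$ if $r\le r_1^\beta$ and has no solution if $r>r_1^\beta$. Furthermore, if $r<r_1^\beta$, the point $\big(H_\beta(y_1^\beta(r)),K_\beta(y_1^\beta(r))\big)$ is a saddle point of $F_\beta(\cdot,r)$.
   Context: $\Xi=\{(x_1,x_2): x_1,x_2\ge0,\ x_1+x_2\le1\}$, $x_0=1-x_1-x_2$, $\mathbf{v}_k=(\cos(2\pi k/3),\sin(2\pi k/3))$, and $F_\beta(\mathbf{x},r)=-\frac12|\sum_{k=0}^2x_k\mathbf{v}_k|^2+\frac1\beta\sum_{k=0}^2x_k\log(3x_k)+r\,x_0-\frac r2(x_1+x_2)$ (potential with external field of magnitude $r$, angle $\pi$). $G_\beta(x)=\frac1\beta\log x-\frac32x$ on $(0,\infty)$, $l_\beta=2/(3\beta)$, $g_\beta=G_\beta(l_\beta)$; for $y<g_\beta$, $H_\beta(y)<l_\beta<K_\beta(y)$ are the two solutions of $G_\beta(x)=y$, and $H_\beta(g_\beta)=K_\beta(g_\beta)=l_\beta$. $r_1^\beta=1-\frac2\beta-\frac{2}{3\beta}\log\big(\frac{3\beta}2-2\big)$. A saddle point is a critical point at which the Hessian in $(x_1,x_2)$ has one positive and one negative eigenvalue. *)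

theory Defs
  imports "HOL-Analysis.Analysis"
begin

definition xlog3 :: "real \<Rightarrow> real" where
  "xlog3 x = (if x = 0 then 0 else x * ln (3 * x))"

text \<open>The potential F_beta((x1,x2), r), with x0 = 1 - x1 - x2 and
  v_k = (cos(2 pi k/3), sin(2 pi k/3)).\<close>
definition Fpot :: "real \<Rightarrow> real \<Rightarrow> real \<Rightarrow> real \<Rightarrow> real" where
  "Fpot \<beta> r x1 x2 =
     (let x0 = 1 - x1 - x2;
          mx = x0 * cos 0 + x1 * cos (2*pi/3) + x2 * cos (4*pi/3);
          my = x0 * sin 0 + x1 * sin (2*pi/3) + x2 * sin (4*pi/3)
      in - (1/2) * (mx^2 + my^2)
         + (1/\<beta>) * (xlog3 x0 + xlog3 x1 + xlog3 x2)
         + r * x0 - (r/2) * (x1 + x2))"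

definition Gfun :: "real \<Rightarrow> real \<Rightarrow> real" where
  "Gfun \<beta> x = (1/\<beta>) * ln x - (3/2) * x"

definition lb :: "real \<Rightarrow> real" where
  "lb \<beta> = 2 / (3 * \<beta>)"

definition gb :: "real \<Rightarrow> real" where
  "gb \<beta> = Gfun \<beta> (lb \<beta>)"

definition Hb :: "real \<Rightarrow> real \<Rightarrow> real" where
  "Hb \<beta> y = (THE x. 0 < x \<and> x \<le> lb \<beta> \<and> Gfun \<beta> x = y)"

definition Kb :: "real \<Rightarrow> real \<Rightarrow> real" where
  "Kb \<beta> y = (THE x. lb \<beta> \<le> x \<and> Gfun \<beta> x = y)"

definition r1 :: "real \<Rightarrow> real" where
  "r1 \<beta> = 1 - 2/\<beta> - (2/(3*\<beta>)) * ln (3*\<beta>/2 - 2)"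

definition eq_y1 :: "real \<Rightarrow> real \<Rightarrow> real \<Rightarrow> bool" where
  "eq_y1 \<beta> r y \<longleftrightarrow> y \<le> gb \<beta> \<and> Kb \<beta> (y - 3*r/2) + Hb \<beta> y + Kb \<beta> y = 1"

definition y1 :: "real \<Rightarrow> real \<Rightarrow> real" where
  "y1 \<beta> r = (THE y. eq_y1 \<beta> r y)"

definition pd1 :: "(real \<Rightarrow> real \<Rightarrow> real) \<Rightarrow> real \<Rightarrow> real \<Rightarrow> real" where
  "pd1 f a b = deriv (\<lambda>t. f t b) a"

definition pd2 :: "(real \<Rightarrow> real \<Rightarrow> real) \<Rightarrow> real \<Rightarrow> real \<Rightarrow> real" where
  "pd2 f a b = deriv (\<lambda>t. f a t) b"

definition hess :: "(real \<Rightarrow> real \<Rightarrow> real) \<Rightarrow> real \<Rightarrow> real \<Rightarrow> nat \<Rightarrow> nat \<Rightarrow> real" where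
  "hess f a b i j =
     (if i = 1 \<and> j = 1 then pd1 (pd1 f) a b
      else if i = 1 \<and> j = 2 then pd2 (pd1 f) a b
      else if i = 2 \<and> j = 1 then pd1 (pd2 f) a b
      else pd2 (pd2 f) a b)"

definition eigen2 :: "(nat \<Rightarrow> nat \<Rightarrow> real) \<Rightarrow> real \<Rightarrow> bool" where
  "eigen2 M lam \<longleftrightarrow> (\<exists>u v. (u, v) \<noteq> (0, 0) \<and>
      M 1 1 * u + M 1 2 * v = lam * u \<and> M 2 1 * u + M 2 2 * v = lam * v)"

definition critical_pt :: "(real \<Rightarrow> real \<Rightarrow> real) \<Rightarrow> real \<Rightarrow> real \<Rightarrow> bool" where
  "critical_pt f a b \<longleftrightarrow> ((\<lambda>p. f (fst p) (snd p)) has_derivative (\<lambda>h. 0)) (at (a, b))"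

definition saddle_pt :: "real \<Rightarrow> real \<Rightarrow> real \<Rightarrow> real \<Rightarrow> bool" where
  "saddle_pt \<beta> r a b \<longleftrightarrow>
     0 < a \<and> 0 < b \<and> a + b < 1 \<and>
     critical_pt (Fpot \<beta> r) a b \<and>
     (\<exists>lam1 lam2. lam1 > 0 \<and> lam2 < 0 \<and> eigen2 (hess (Fpot \<beta> r) a b) lam1
                              \<and> eigen2 (hess (Fpot \<beta> r) a b) lam2)"

end

theory Submission
  imports Defs
begin

text \<open>\<open>G\<close> increases on \<open>(0, l]\<close> and decreases on \<open>[l, \<infinity>)\<close>, so its inverse branches \<open>H\<close>
  (increasing) and \<open>K\<close> (decreasing) are continuous on \<open>(-\<infinity>, g]\<close>. Writing \<open>K = t H\<close>,
  the relation \<open>G(H) = G(K)\<close> gives \<open>H = l ln t / (t - 1)\<close>, hence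
  \<open>H + K = l (t + 1) ln t / (t - 1)\<close>, which increases with \<open>t\<close>; as \<open>y\<close> grows, \<open>t\<close>
  decreases, so \<open>H + K\<close> decreases. The left-hand side of the equation is therefore continuous
  and strictly decreasing; it exceeds 1 at \<open>y = G(1)\<close> and equals \<open>K(g - 3r/2) + 2l\<close> at
  \<open>y = g\<close>, which is at most 1 exactly when \<open>r \<le> r1\<close>, because \<open>G(1 - 2l) = g - 3 r1 / 2\<close>.

  At a solution put \<open>x0 = 1 - H - K = K(y - 3r/2)\<close>. Since
  \<open>\<partial>F/\<partial>x1 = G(x1) - G(x0) - 3r/2\<close> (and symmetrically), \<open>(H, K)\<close> is critical, and the Hessian
  is \<open>[[A + C, C], [C, B + C]]\<close> with \<open>A = G'(H) > 0\<close>, \<open>B = G'(K) < 0\<close>, \<open>C = G'(x0) < 0\<close>.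
  Finally \<open>A + B > 0\<close> reduces to \<open>2 ln t < t - 1/t\<close>, so the determinant \<open>AB + C(A + B)\<close>
  is negative.\<close>

section \<open>The inverse branches of \<open>G\<close>\<close>

definition dGfun :: "real \<Rightarrow> real \<Rightarrow> real" where
  "dGfun \<beta> x = 1 / (\<beta> * x) - 3/2"

lemma lb_bounds: "\<beta> > 2 \<Longrightarrow> 0 < lb \<beta> \<and> lb \<beta> < 1/3"
  unfolding lb_def by (auto simp: field_simps)

lemma DERIV_Gfun: "x > 0 \<Longrightarrow> (Gfun \<beta> has_real_derivative dGfun \<beta> x) (at x)"
  unfolding Gfun_def dGfun_def by (rule derivative_eq_intros refl | simp)+

lemma DERIV_Gfun_compose[derivative_intros]:
  "(f has_real_derivative f') (at x) \<Longrightarrow> 0 < f x \<Longrightarrow>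
    ((\<lambda>t. Gfun \<beta> (f t)) has_real_derivative dGfun \<beta> (f x) * f') (at x)"
  by (rule DERIV_chain2[OF DERIV_Gfun])

lemma dGfun_pos_iff: "\<beta> > 0 \<Longrightarrow> x > 0 \<Longrightarrow> dGfun \<beta> x > 0 \<longleftrightarrow> x < lb \<beta>"
  unfolding dGfun_def lb_def by (auto simp: field_simps)

lemma dGfun_neg_iff: "\<beta> > 0 \<Longrightarrow> x > 0 \<Longrightarrow> dGfun \<beta> x < 0 \<longleftrightarrow> lb \<beta> < x"
  unfolding dGfun_def lb_def by (auto simp: field_simps)

lemma continuous_on_Gfun: "0 < a \<Longrightarrow> continuous_on {a..b} (Gfun \<beta>)"
  unfolding Gfun_def by (intro continuous_intros) auto

lemma Gfun_strict_mono:
  assumes "\<beta> > 0" "0 < a" "a < b" "b \<le> lb \<beta>" shows "Gfun \<beta> a < Gfun \<beta> b"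
proof (rule DERIV_pos_imp_increasing_open[OF \<open>a < b\<close>])
  fix x assume "a < x" "x < b"
  then show "\<exists>y. DERIV (Gfun \<beta>) x :> y \<and> y > 0"
    using assms DERIV_Gfun[of x \<beta>] dGfun_pos_iff[of \<beta> x] by auto
qed (use assms continuous_on_Gfun in auto)

lemma Gfun_strict_antimono:
  assumes "\<beta> > 0" "lb \<beta> \<le> a" "a < b" shows "Gfun \<beta> b < Gfun \<beta> a"
proof -
  have "0 < a" using assms lb_def by (smt (verit) divide_pos_pos)
  show ?thesis
  proof (rule DERIV_neg_imp_decreasing_open[OF \<open>a < b\<close>])
    fix x assume "a < x" "x < b"
    then show "\<exists>y. DERIV (Gfun \<beta>) x :> y \<and> y < 0"
      using assms \<open>0 < a\<close> DERIV_Gfun[of x \<beta>] dGfun_neg_iff[of \<beta> x] by auto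
  qed (use \<open>0 < a\<close> continuous_on_Gfun in auto)
qed

lemma Gfun_le_gb: assumes "\<beta> > 2" "x > 0" shows "Gfun \<beta> x \<le> gb \<beta>"
  using Gfun_strict_mono[of \<beta> x "lb \<beta>"] Gfun_strict_antimono[of \<beta> "lb \<beta>" x] assms
  unfolding gb_def by (cases x "lb \<beta>" rule: linorder_cases) auto

lemma Gfun_eq_imp_eq_left:
  assumes "\<beta> > 0" "0 < x" "x \<le> lb \<beta>" "0 < x'" "x' \<le> lb \<beta>" "Gfun \<beta> x = Gfun \<beta> x'"
  shows "x = x'"
  using Gfun_strict_mono[of \<beta> x x'] Gfun_strict_mono[of \<beta> x' x] assms
  by (cases x x' rule: linorder_cases) auto

lemma Gfun_eq_imp_eq_right:
  assumes "\<beta> > 0" "lb \<beta> \<le> x" "lb \<beta> \<le> x'" "Gfun \<beta> x = Gfun \<beta> x'"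
  shows "x = x'"
  using Gfun_strict_antimono[of \<beta> x x'] Gfun_strict_antimono[of \<beta> x' x] assms
  by (cases x x' rule: linorder_cases) auto

lemma Hb_eqI: "\<beta> > 0 \<Longrightarrow> 0 < x \<Longrightarrow> x \<le> lb \<beta> \<Longrightarrow> Gfun \<beta> x = y \<Longrightarrow> Hb \<beta> y = x"
  unfolding Hb_def using Gfun_eq_imp_eq_left by (intro the_equality) blast+

lemma Kb_eqI: "\<beta> > 0 \<Longrightarrow> lb \<beta> \<le> x \<Longrightarrow> Gfun \<beta> x = y \<Longrightarrow> Kb \<beta> y = x"
  unfolding Kb_def using Gfun_eq_imp_eq_right by (intro the_equality) blast+

text \<open>Both branches are reached by the intermediate value theorem, since
  \<open>Gfun \<beta> x \<le> y\<close> for \<open>x \<le> exp (\<beta> * y)\<close> and for \<open>x \<ge> -y\<close>.\<close>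

lemma Hb_spec:
  assumes "\<beta> > 2" "y \<le> gb \<beta>"
  shows "0 < Hb \<beta> y \<and> Hb \<beta> y \<le> lb \<beta> \<and> Gfun \<beta> (Hb \<beta> y) = y"
proof -
  define x0 where "x0 = min (lb \<beta>) (exp (\<beta> * y))"
  have x0: "0 < x0" "x0 \<le> lb \<beta>" "x0 \<le> exp (\<beta> * y)"
    using lb_bounds[OF assms(1)] unfolding x0_def by auto
  then have "ln x0 \<le> \<beta> * y"
    by (metis ln_exp ln_le_cancel_iff exp_gt_zero)
  then have "(1/\<beta>) * ln x0 \<le> y"
    using assms by (simp add: field_simps mult.commute)
  then have "Gfun \<beta> x0 \<le> y"
    using x0 unfolding Gfun_def by linarith
  then obtain x where "x0 \<le> x" "x \<le> lb \<beta>" "Gfun \<beta> x = y"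
    using IVT'[of "Gfun \<beta>" x0 y "lb \<beta>"] continuous_on_Gfun[of x0] x0 assms gb_def by auto
  then show ?thesis
    using Hb_eqI[of \<beta> x y] x0 assms by auto
qed

lemma Kb_spec:
  assumes "\<beta> > 2" "y \<le> gb \<beta>"
  shows "lb \<beta> \<le> Kb \<beta> y \<and> Gfun \<beta> (Kb \<beta> y) = y"
proof -
  define x1 where "x1 = max (lb \<beta>) (- y)"
  have x1: "0 < x1" "lb \<beta> \<le> x1" "- y \<le> x1"
    using lb_bounds[OF assms(1)] unfolding x1_def by auto
  have "ln x1 \<le> x1"
    using ln_le_minus_one[of x1] x1 by linarith
  moreover have "2 * x1 \<le> \<beta> * x1"
    using assms x1 by simp
  ultimately have "(1/\<beta>) * ln x1 \<le> (1/2) * x1"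
    using assms by (simp add: field_simps)
  then have "Gfun \<beta> x1 \<le> y"
    using x1 unfolding Gfun_def by linarith
  then obtain x where "lb \<beta> \<le> x" "Gfun \<beta> x = y"
    using IVT2'[of "Gfun \<beta>" x1 y "lb \<beta>"] continuous_on_Gfun[of "lb \<beta>" x1] x1 assms gb_def
      lb_bounds[OF assms(1)] by auto
  then show ?thesis
    using Kb_eqI[of \<beta> x y] assms by auto
qed

lemma Hb_strict_mono:
  assumes "\<beta> > 2" "u < v" "v \<le> gb \<beta>" shows "Hb \<beta> u < Hb \<beta> v"
proof (rule ccontr)
  assume "\<not> Hb \<beta> u < Hb \<beta> v"
  moreover have "Gfun \<beta> (Hb \<beta> u) = u" "Gfun \<beta> (Hb \<beta> v) = v" "0 < Hb \<beta> v" "Hb \<beta> u \<le> lb \<beta>"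
    using Hb_spec[OF assms(1)] assms by auto
  ultimately show False
    using Gfun_strict_mono[of \<beta> "Hb \<beta> v" "Hb \<beta> u"] assms by (cases "Hb \<beta> u = Hb \<beta> v") auto
qed

lemma Kb_strict_antimono:
  assumes "\<beta> > 2" "u < v" "v \<le> gb \<beta>" shows "Kb \<beta> v < Kb \<beta> u"
proof (rule ccontr)
  assume "\<not> Kb \<beta> v < Kb \<beta> u"
  moreover have "Gfun \<beta> (Kb \<beta> u) = u" "Gfun \<beta> (Kb \<beta> v) = v" "lb \<beta> \<le> Kb \<beta> u"
    using Kb_spec[OF assms(1)] assms by auto
  ultimately show False
    using Gfun_strict_antimono[of \<beta> "Kb \<beta> u" "Kb \<beta> v"] assms by (cases "Kb \<beta> u = Kb \<beta> v") auto
qed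

lemma Kb_less_iff:
  assumes "\<beta> > 2" "u \<le> gb \<beta>" "v \<le> gb \<beta>" shows "Kb \<beta> u < Kb \<beta> v \<longleftrightarrow> v < u"
  using Kb_strict_antimono[OF assms(1)] assms by (cases u v rule: linorder_cases) fastforce+

lemma Hb_Kb_gb: "\<beta> > 2 \<Longrightarrow> Hb \<beta> (gb \<beta>) = lb \<beta> \<and> Kb \<beta> (gb \<beta>) = lb \<beta>"
  using Hb_eqI[of \<beta> "lb \<beta>"] Kb_eqI[of \<beta> "lb \<beta>"] lb_bounds[of \<beta>] unfolding gb_def by auto

lemma Hb_Kb_less_gb:
  assumes "\<beta> > 2" "y < gb \<beta>" shows "Hb \<beta> y < lb \<beta>" "lb \<beta> < Kb \<beta> y"
proof -
  have "Hb \<beta> y \<noteq> lb \<beta>" "Kb \<beta> y \<noteq> lb \<beta>"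
    using Hb_spec[of \<beta> y] Kb_spec[of \<beta> y] assms unfolding gb_def by auto
  then show "Hb \<beta> y < lb \<beta>" "lb \<beta> < Kb \<beta> y"
    using Hb_spec[of \<beta> y] Kb_spec[of \<beta> y] assms by auto
qed

lemma continuous_on_left_inverse_segment:
  fixes f g :: "real \<Rightarrow> real"
  assumes "continuous_on {a..b} f" "a \<le> b" "\<And>x. x \<in> {a..b} \<Longrightarrow> g (f x) = x"
  shows "continuous_on (closed_segment (f a) (f b)) g"
proof (rule continuous_on_subset)
  show "continuous_on (f ` {a..b}) g"
    using assms(3) by (intro continuous_on_inv[OF assms(1) compact_Icc]) blast
  have "connected (f ` {a..b})"
    using assms(1) connected_Icc by (rule connected_continuous_image)
  moreover have "f a \<in> f ` {a..b}" "f b \<in> f ` {a..b}"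
    using assms(2) by auto
  ultimately show "closed_segment (f a) (f b) \<subseteq> f ` {a..b}"
    unfolding closed_segment_eq_real_ivl by (simp add: connected_contains_Icc)
qed

lemma continuous_on_Hb:
  assumes "\<beta> > 2" "a \<le> gb \<beta>" shows "continuous_on {a..gb \<beta>} (Hb \<beta>)"
proof -
  have Ha: "0 < Hb \<beta> a" "Hb \<beta> a \<le> lb \<beta>" "Gfun \<beta> (Hb \<beta> a) = a"
    using Hb_spec assms by auto
  have "Hb \<beta> (Gfun \<beta> x) = x" if "x \<in> {Hb \<beta> a..lb \<beta>}" for x
    using that Ha assms by (intro Hb_eqI) auto
  then have "continuous_on (closed_segment (Gfun \<beta> (Hb \<beta> a)) (Gfun \<beta> (lb \<beta>))) (Hb \<beta>)"
    using Ha continuous_on_Gfun by (intro continuous_on_left_inverse_segment) auto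
  then show ?thesis
    using assms unfolding Ha(3) gb_def[symmetric] closed_segment_eq_real_ivl by simp
qed

lemma continuous_on_Kb:
  assumes "\<beta> > 2" "a \<le> gb \<beta>" shows "continuous_on {a..gb \<beta>} (Kb \<beta>)"
proof -
  have Ka: "lb \<beta> \<le> Kb \<beta> a" "Gfun \<beta> (Kb \<beta> a) = a"
    using Kb_spec assms by auto
  have "Kb \<beta> (Gfun \<beta> x) = x" if "x \<in> {lb \<beta>..Kb \<beta> a}" for x
    using that assms by (intro Kb_eqI) auto
  then have "continuous_on (closed_segment (Gfun \<beta> (lb \<beta>)) (Gfun \<beta> (Kb \<beta> a))) (Kb \<beta>)"
    using Ka lb_bounds[OF assms(1)] continuous_on_Gfun
    by (intro continuous_on_left_inverse_segment) auto
  then show ?thesis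
    using assms unfolding Ka(2) gb_def[symmetric] closed_segment_eq_real_ivl
    by (simp split: if_splits)
qed

section \<open>Monotonicity of \<open>H + K\<close>\<close>

lemma two_ln_less_diff_inverse:
  fixes t :: real assumes "t > 1" shows "2 * ln t < t - 1/t"
proof -
  have "(\<lambda>x. x - 1/x - 2 * ln x) 1 < (\<lambda>x. x - 1/x - 2 * ln x) t"
  proof (rule DERIV_pos_imp_increasing_open[OF assms])
    fix x :: real assume x: "1 < x" "x < t"
    have "DERIV (\<lambda>x. x - 1/x - 2 * ln x) x :> (1 - 1/x)^2"
      using x by (auto intro!: derivative_eq_intros simp: field_simps power2_eq_square)
    then show "\<exists>y. DERIV (\<lambda>x. x - 1/x - 2 * ln x) x :> y \<and> y > 0"
      using x by force
  qed (auto intro!: continuous_intros)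
  then show ?thesis by simp
qed

lemma two_diff_less_ln:
  fixes t :: real assumes "t > 1" shows "2 * (t - 1) < (t + 1) * ln t"
proof -
  have "(\<lambda>x. (x + 1) * ln x - 2 * (x - 1)) 1 < (\<lambda>x. (x + 1) * ln x - 2 * (x - 1)) t"
  proof (rule DERIV_pos_imp_increasing_open[OF assms])
    fix x :: real assume x: "1 < x" "x < t"
    have "DERIV (\<lambda>x. (x + 1) * ln x - 2 * (x - 1)) x :> ln x - (1 - 1/x)"
      using x by (auto intro!: derivative_eq_intros simp: field_simps)
    moreover have "1 - 1/x < ln x"
      using ln_diff_less[of 1 x] x by (simp add: field_simps)
    ultimately show "\<exists>y. DERIV (\<lambda>x. (x + 1) * ln x - 2 * (x - 1)) x :> y \<and> y > 0"
      by force
  qed (auto intro!: continuous_intros)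
  then show ?thesis by simp
qed

definition phi :: "real \<Rightarrow> real" where
  "phi t = (t + 1) * ln t / (t - 1)"

lemma phi_gt_two: "t > 1 \<Longrightarrow> 2 < phi t"
  using two_diff_less_ln[of t] unfolding phi_def by (simp add: field_simps)

lemma phi_strict_mono:
  fixes s t :: real assumes "1 < s" "s < t" shows "phi s < phi t"
proof (rule DERIV_pos_imp_increasing[OF assms(2)])
  fix x assume "s \<le> x" "x \<le> t"
  then have x: "x > 1" using assms by linarith
  have "DERIV phi x :> ((x - 1/x) - 2 * ln x) / (x - 1)^2"
    unfolding phi_def using x
    by (auto intro!: derivative_eq_intros simp: field_simps power2_eq_square)
  moreover have "(x - 1/x) - 2 * ln x > 0"
    using two_ln_less_diff_inverse[OF x] by simp
  ultimately show "\<exists>y. DERIV phi x :> y \<and> y > 0"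
    using x by force
qed

lemma Kb_div_Hb:
  assumes "\<beta> > 2" "y < gb \<beta>"
  shows "1 < Kb \<beta> y / Hb \<beta> y"
    and "Hb \<beta> y * (Kb \<beta> y / Hb \<beta> y - 1) = lb \<beta> * ln (Kb \<beta> y / Hb \<beta> y)"
proof -
  have H: "0 < Hb \<beta> y" "Gfun \<beta> (Hb \<beta> y) = y"
    using Hb_spec assms by auto
  have K: "Gfun \<beta> (Kb \<beta> y) = y"
    using Kb_spec assms by auto
  have HK: "Hb \<beta> y < Kb \<beta> y"
    using Hb_Kb_less_gb[OF assms] by linarith
  then show "1 < Kb \<beta> y / Hb \<beta> y"
    using H by simp
  have "(1/\<beta>) * (ln (Kb \<beta> y) - ln (Hb \<beta> y)) = (3/2) * (Kb \<beta> y - Hb \<beta> y)"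
    using H K unfolding Gfun_def by (simp add: algebra_simps)
  then have "lb \<beta> * ln (Kb \<beta> y / Hb \<beta> y) = Kb \<beta> y - Hb \<beta> y"
    using H HK assms(1) unfolding lb_def by (simp add: ln_div field_simps)
  moreover have "Hb \<beta> y * (Kb \<beta> y / Hb \<beta> y - 1) = Kb \<beta> y - Hb \<beta> y"
    using H by (simp add: field_simps)
  ultimately show "Hb \<beta> y * (Kb \<beta> y / Hb \<beta> y - 1) = lb \<beta> * ln (Kb \<beta> y / Hb \<beta> y)"
    by simp
qed

lemma Hb_plus_Kb_eq_phi:
  assumes "\<beta> > 2" "y < gb \<beta>"
  shows "Hb \<beta> y + Kb \<beta> y = lb \<beta> * phi (Kb \<beta> y / Hb \<beta> y)"
proof -
  define t where "t = Kb \<beta> y / Hb \<beta> y"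
  have t: "1 < t" "Hb \<beta> y * (t - 1) = lb \<beta> * ln t"
    using Kb_div_Hb[OF assms] unfolding t_def by auto
  have "0 < Hb \<beta> y"
    using Hb_spec assms by auto
  then have "Hb \<beta> y + Kb \<beta> y = Hb \<beta> y * (t + 1)"
    unfolding t_def by (simp add: field_simps)
  also have "\<dots> = lb \<beta> * phi t"
    using t unfolding phi_def by (simp add: field_simps)
  finally show ?thesis
    unfolding t_def .
qed

lemma Hb_plus_Kb_strict_antimono:
  assumes "\<beta> > 2" "u < v" "v \<le> gb \<beta>"
  shows "Hb \<beta> v + Kb \<beta> v < Hb \<beta> u + Kb \<beta> u"
proof -
  have l: "0 < lb \<beta>"
    using lb_bounds assms by auto
  have u: "u < gb \<beta>" "1 < Kb \<beta> u / Hb \<beta> u"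
    using assms Kb_div_Hb[of \<beta> u] by auto
  show ?thesis
  proof (cases "v = gb \<beta>")
    case True
    then show ?thesis
      using Hb_plus_Kb_eq_phi[OF assms(1) u(1)] Hb_Kb_gb[OF assms(1)] phi_gt_two[OF u(2)] l by simp
  next
    case False
    then have v: "v < gb \<beta>" "1 < Kb \<beta> v / Hb \<beta> v"
      using assms Kb_div_Hb[of \<beta> v] by auto
    have "0 < Hb \<beta> u" "Hb \<beta> u < Hb \<beta> v" "Kb \<beta> v < Kb \<beta> u" "0 < Kb \<beta> v"
      using Hb_spec[of \<beta> u] Hb_strict_mono[OF assms] Kb_strict_antimono[OF assms] Kb_spec[OF assms(1,3)] l
      assms by auto
    then have "Kb \<beta> v / Hb \<beta> v < Kb \<beta> u / Hb \<beta> v"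
      by (simp add: divide_strict_right_mono)
    also have "\<dots> < Kb \<beta> u / Hb \<beta> u"
      using \<open>0 < Hb \<beta> u\<close> \<open>Hb \<beta> u < Hb \<beta> v\<close> \<open>Kb \<beta> v < Kb \<beta> u\<close> \<open>0 < Kb \<beta> v\<close>
      by (intro divide_strict_left_mono) auto
    finally have "Kb \<beta> v / Hb \<beta> v < Kb \<beta> u / Hb \<beta> u" .
    then show ?thesis
      using Hb_plus_Kb_eq_phi[OF assms(1)] u v phi_strict_mono l by simp
  qed
qed

lemma dGfun_Hb_plus_dGfun_Kb_pos:
  assumes "\<beta> > 2" "y < gb \<beta>"
  shows "0 < dGfun \<beta> (Hb \<beta> y) + dGfun \<beta> (Kb \<beta> y)"
proof -
  define t where "t = Kb \<beta> y / Hb \<beta> y"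
  define h where "h = Hb \<beta> y"
  have t: "1 < t" "h * (t - 1) = lb \<beta> * ln t"
    using Kb_div_Hb[OF assms] unfolding t_def h_def by auto
  have "0 < h"
    using Hb_spec[of \<beta> y] assms unfolding h_def by auto
  then have h: "0 < h" "Kb \<beta> y = t * h"
    unfolding t_def h_def by auto
  have "lb \<beta> * (2 * t * ln t) < lb \<beta> * (t * t - 1)"
    using two_ln_less_diff_inverse[OF t(1)] t(1) lb_bounds[OF assms(1)]
    by (intro mult_strict_left_mono) (auto simp: field_simps)
  moreover have "(t - 1) * (2 * t * h) = lb \<beta> * (2 * t * ln t)"
    using t(2) by (metis mult.assoc mult.commute)
  moreover have "lb \<beta> * (t * t - 1) = (t - 1) * (lb \<beta> * (1 + t))"
    by (simp add: algebra_simps)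
  ultimately have "(t - 1) * (2 * t * h) < (t - 1) * (lb \<beta> * (1 + t))"
    by linarith
  then have "2 * t * h < lb \<beta> * (1 + t)"
    using t(1) by simp
  then have "3 * (\<beta> * (t * h)) < 1 + t"
    using assms(1) unfolding lb_def by (simp add: field_simps)
  then have "3 < (1 + t) / (\<beta> * (t * h))"
    using h t(1) assms(1) by (simp add: pos_less_divide_eq)
  moreover have "dGfun \<beta> h + dGfun \<beta> (t * h) = (1 + t) / (\<beta> * (t * h)) - 3"
    using h t(1) assms(1) unfolding dGfun_def by (simp add: field_simps)
  ultimately show ?thesis
    using h unfolding h_def by simp
qed

section \<open>The equation for \<open>y1\<close>\<close>

definition eq_y1_lhs :: "real \<Rightarrow> real \<Rightarrow> real \<Rightarrow> real" where
  "eq_y1_lhs \<beta> r y = Kb \<beta> (y - 3*r/2) + Hb \<beta> y + Kb \<beta> y"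

lemma eq_y1_iff: "eq_y1 \<beta> r y \<longleftrightarrow> y \<le> gb \<beta> \<and> eq_y1_lhs \<beta> r y = 1"
  unfolding eq_y1_def eq_y1_lhs_def by simp

lemma eq_y1_lhs_strict_antimono:
  assumes "\<beta> > 2" "r \<ge> 0" "u < v" "v \<le> gb \<beta>"
  shows "eq_y1_lhs \<beta> r v < eq_y1_lhs \<beta> r u"
  using Kb_strict_antimono[of \<beta> "u - 3*r/2" "v - 3*r/2"] Hb_plus_Kb_strict_antimono[of \<beta> u v] assms
  unfolding eq_y1_lhs_def by auto

lemma continuous_on_eq_y1_lhs:
  assumes "\<beta> > 2" "r \<ge> 0" "a \<le> gb \<beta>"
  shows "continuous_on {a..gb \<beta>} (eq_y1_lhs \<beta> r)"
proof -
  have K: "continuous_on {a - 3*r/2..gb \<beta>} (Kb \<beta>)"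
    using continuous_on_Kb assms by auto
  have "continuous_on {a..gb \<beta>} (\<lambda>y. Kb \<beta> (y - 3*r/2))"
    by (rule continuous_on_compose2[OF K]) (use assms in \<open>auto intro!: continuous_intros\<close>)
  moreover have "continuous_on {a..gb \<beta>} (Kb \<beta>)"
    using continuous_on_subset[OF K] assms by auto
  ultimately show ?thesis
    unfolding eq_y1_lhs_def using continuous_on_Hb[OF assms(1,3)] by (auto intro!: continuous_intros)
qed

lemma eq_y1_lhs_Gfun_one:
  assumes "\<beta> > 2" "r \<ge> 0" shows "Gfun \<beta> 1 < gb \<beta>" "1 < eq_y1_lhs \<beta> r (Gfun \<beta> 1)"
proof -
  have l: "0 < lb \<beta>" "lb \<beta> < 1"
    using lb_bounds[OF assms(1)] by auto
  then show g: "Gfun \<beta> 1 < gb \<beta>"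
    unfolding gb_def using Gfun_strict_antimono[of \<beta> "lb \<beta>" 1] assms by auto
  have "Kb \<beta> (Gfun \<beta> 1) = 1"
    using Kb_eqI[of \<beta> 1] l assms by auto
  moreover have "0 < Hb \<beta> (Gfun \<beta> 1)" "0 < Kb \<beta> (Gfun \<beta> 1 - 3*r/2)"
    using Hb_spec[of \<beta>] Kb_spec[of \<beta> "Gfun \<beta> 1 - 3*r/2"] g l assms by force+
  ultimately show "1 < eq_y1_lhs \<beta> r (Gfun \<beta> 1)"
    unfolding eq_y1_lhs_def by linarith
qed

lemma Gfun_one_minus_two_lb:
  assumes "\<beta> > 2" shows "Gfun \<beta> (1 - 2 * lb \<beta>) = gb \<beta> - 3/2 * r1 \<beta>"
proof -
  have "1 - 2 * lb \<beta> = (2/(3*\<beta>)) * (3*\<beta>/2 - 2)"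
    unfolding lb_def using assms by (simp add: field_simps)
  moreover have "ln ((2/(3*\<beta>)) * (3*\<beta>/2 - 2)) = ln (2/(3*\<beta>)) + ln (3*\<beta>/2 - 2)"
    using assms by (intro ln_mult_pos) auto
  ultimately have "ln (1 - 2 * lb \<beta>) = ln (2/(3*\<beta>)) + ln (3*\<beta>/2 - 2)"
    by simp
  then show ?thesis
    unfolding gb_def Gfun_def r1_def lb_def using assms by (simp add: field_simps)
qed

lemma eq_y1_lhs_gb:
  assumes "\<beta> > 2" "r \<ge> 0"
  shows "eq_y1_lhs \<beta> r (gb \<beta>) < 1 \<longleftrightarrow> r < r1 \<beta>"
    and "eq_y1_lhs \<beta> r (gb \<beta>) \<le> 1 \<longleftrightarrow> r \<le> r1 \<beta>"
proof -
  define m where "m = 1 - 2 * lb \<beta>"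
  have "lb \<beta> \<le> m" "0 < lb \<beta>"
    using lb_bounds[OF assms(1)] unfolding m_def by auto
  then have m: "Kb \<beta> (Gfun \<beta> m) = m" "Gfun \<beta> m \<le> gb \<beta>"
    using Kb_eqI[OF _ _ refl] Gfun_le_gb assms(1) by auto
  have lhs: "eq_y1_lhs \<beta> r (gb \<beta>) - 1 = Kb \<beta> (gb \<beta> - 3*r/2) - Kb \<beta> (Gfun \<beta> m)"
    using Hb_Kb_gb[OF assms(1)] m unfolding eq_y1_lhs_def m_def by simp
  have r1: "Gfun \<beta> m = gb \<beta> - 3/2 * r1 \<beta>"
    using Gfun_one_minus_two_lb[OF assms(1)] unfolding m_def .
  show "eq_y1_lhs \<beta> r (gb \<beta>) < 1 \<longleftrightarrow> r < r1 \<beta>"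
    using Kb_less_iff[OF assms(1), of "gb \<beta> - 3*r/2" "Gfun \<beta> m"] lhs m(2) assms r1 by auto
  show "eq_y1_lhs \<beta> r (gb \<beta>) \<le> 1 \<longleftrightarrow> r \<le> r1 \<beta>"
    using Kb_less_iff[OF assms(1), of "Gfun \<beta> m" "gb \<beta> - 3*r/2"] lhs m(2) assms r1 by auto
qed

lemma eq_y1_unique:
  assumes "\<beta> > 2" "r \<ge> 0" "eq_y1 \<beta> r y" "eq_y1 \<beta> r y'" shows "y = y'"
  using eq_y1_lhs_strict_antimono[OF assms(1,2)] assms(3,4) unfolding eq_y1_iff
  by (cases y y' rule: linorder_cases) fastforce+

lemma eq_y1_exists_iff:
  assumes "\<beta> > 2" "r \<ge> 0" shows "(\<exists>y. eq_y1 \<beta> r y) \<longleftrightarrow> r \<le> r1 \<beta>"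
proof
  assume "\<exists>y. eq_y1 \<beta> r y"
  then obtain y where "y \<le> gb \<beta>" "eq_y1_lhs \<beta> r y = 1"
    unfolding eq_y1_iff by blast
  then have "eq_y1_lhs \<beta> r (gb \<beta>) \<le> 1"
    using eq_y1_lhs_strict_antimono[OF assms, of y "gb \<beta>"] by (cases "y = gb \<beta>") auto
  then show "r \<le> r1 \<beta>"
    using eq_y1_lhs_gb[OF assms] by blast
next
  assume "r \<le> r1 \<beta>"
  then have "eq_y1_lhs \<beta> r (gb \<beta>) \<le> 1"
    using eq_y1_lhs_gb[OF assms] by blast
  then obtain y where "y \<le> gb \<beta>" "eq_y1_lhs \<beta> r y = 1"
    using IVT2'[of "eq_y1_lhs \<beta> r" "gb \<beta>" 1 "Gfun \<beta> 1"] eq_y1_lhs_Gfun_one[OF assms]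
      continuous_on_eq_y1_lhs[OF assms] by force
  then show "\<exists>y. eq_y1 \<beta> r y"
    unfolding eq_y1_iff by blast
qed

lemma y1_spec:
  assumes "\<beta> > 2" "r \<ge> 0" "r < r1 \<beta>" shows "eq_y1 \<beta> r (y1 \<beta> r)" "y1 \<beta> r < gb \<beta>"
proof -
  have "\<exists>!y. eq_y1 \<beta> r y"
    using eq_y1_exists_iff[OF assms(1,2)] eq_y1_unique[OF assms(1,2)] assms(3) by auto
  then show "eq_y1 \<beta> r (y1 \<beta> r)"
    unfolding y1_def by (rule theI')
  moreover have "eq_y1_lhs \<beta> r (gb \<beta>) < 1"
    using eq_y1_lhs_gb[OF assms(1,2)] assms(3) by blast
  ultimately show "y1 \<beta> r < gb \<beta>"
    unfolding eq_y1_iff by (metis order_le_imp_less_or_eq less_irrefl)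
qed

section \<open>Derivatives of the potential\<close>

lemma cos_240: "cos (4*pi/3) = -1/2" and sin_240: "sin (4*pi/3) = - sqrt 3 / 2"
  using cos_double_cos[of "2*pi/3"] sin_double[of "2*pi/3"]
  by (simp_all add: cos_120 sin_120 power2_eq_square)

lemma xlog3_has_derivative[derivative_intros]:
  assumes "(f has_derivative f') (at x)" "0 < f x"
  shows "((\<lambda>y. xlog3 (f y)) has_derivative (\<lambda>h. (ln (3 * f x) + 1) * f' h)) (at x)"
proof -
  have "((\<lambda>t. t * ln (3 * t)) has_real_derivative ln (3 * f x) + 1) (at (f x))"
    using assms(2) by (auto intro!: derivative_eq_intros)
  then have "(xlog3 has_real_derivative ln (3 * f x) + 1) (at (f x))"
    by (rule has_field_derivative_transform_within_open[where S = "{0<..}"])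
      (use assms(2) in \<open>auto simp: xlog3_def\<close>)
  then have "(xlog3 has_derivative (\<lambda>h. (ln (3 * f x) + 1) * h)) (at (f x))"
    by (simp add: has_field_derivative_def)
  from has_derivative_compose[OF assms(1) this] show ?thesis .
qed

definition Fgrad :: "real \<Rightarrow> real \<Rightarrow> real \<Rightarrow> real \<Rightarrow> real" where
  "Fgrad \<beta> r x y = Gfun \<beta> x - Gfun \<beta> (1 - x - y) - 3*r/2"

lemma Fpot_has_derivative:
  assumes "\<beta> > 0" "0 < a" "0 < b" "a + b < 1"
  shows "((\<lambda>p. Fpot \<beta> r (fst p) (snd p)) has_derivative
           (\<lambda>h. Fgrad \<beta> r a b * fst h + Fgrad \<beta> r b a * snd h)) (at (a, b))"
proof -
  have ln_x0: "ln (3 - 3*a - 3*b) = ln 3 + ln (1 - a - b)"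
    using ln_mult[of 3 "1 - a - b"] assms by (simp add: algebra_simps)
  have x0: "1 - b - a = 1 - a - b"
    by simp
  show ?thesis
    unfolding Fpot_def Let_def
    apply (rule has_derivative_eq_rhs)
     apply (use assms in \<open>auto intro!: derivative_eq_intros\<close>)[1]
    apply (use assms in \<open>simp add: Fgrad_def Gfun_def fun_eq_iff ln_mult ln_x0 x0
      cos_120 sin_120 cos_240 sin_240\<close>)
    apply (simp add: field_simps)
    done
qed

lemma pd1_pd2_eqI:
  assumes "((\<lambda>p. f (fst p) (snd p)) has_derivative (\<lambda>h. d1 * fst h + d2 * snd h)) (at (a, b))"
  shows "pd1 f a b = d1" "pd2 f a b = d2"
proof -
  have "((\<lambda>t. (t, b)) has_derivative (\<lambda>h. (h, 0))) (at a)"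
       "((\<lambda>t. (a, t)) has_derivative (\<lambda>h. (0, h))) (at b)"
    by (auto intro!: derivative_eq_intros)
  from this[THEN has_derivative_compose, OF assms]
  have "((\<lambda>t. f t b) has_real_derivative d1) (at a)" "((\<lambda>t. f a t) has_real_derivative d2) (at b)"
    by (simp_all add: has_field_derivative_def mult_commute_abs)
  then show "pd1 f a b = d1" "pd2 f a b = d2"
    unfolding pd1_def pd2_def by (simp_all add: DERIV_imp_deriv)
qed

lemma deriv_transform_within_open:
  assumes "(g has_real_derivative D) (at x)" "open S" "x \<in> S" "\<And>y. y \<in> S \<Longrightarrow> g y = f y"
  shows "deriv f x = D"
  using has_field_derivative_transform_within_open[OF assms] by (rule DERIV_imp_deriv)

lemma Fgrad_DERIV:
  assumes "0 < x" "x + y < 1"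
  shows "((\<lambda>t. Fgrad \<beta> r t y) has_real_derivative dGfun \<beta> x + dGfun \<beta> (1 - x - y)) (at x)"
    and "((\<lambda>t. Fgrad \<beta> r x t) has_real_derivative dGfun \<beta> (1 - x - y)) (at y)"
  unfolding Fgrad_def using assms by (auto intro!: derivative_eq_intros)

lemma hess_Fpot:
  assumes "\<beta> > 0" "0 < a" "0 < b" "a + b < 1"
  shows "hess (Fpot \<beta> r) a b 1 1 = dGfun \<beta> a + dGfun \<beta> (1 - a - b)"
    and "hess (Fpot \<beta> r) a b 1 2 = dGfun \<beta> (1 - a - b)"
    and "hess (Fpot \<beta> r) a b 2 1 = dGfun \<beta> (1 - a - b)"
    and "hess (Fpot \<beta> r) a b 2 2 = dGfun \<beta> b + dGfun \<beta> (1 - a - b)"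
proof -
  have pd: "pd1 (Fpot \<beta> r) x y = Fgrad \<beta> r x y" "pd2 (Fpot \<beta> r) x y = Fgrad \<beta> r y x"
    if "0 < x" "0 < y" "x + y < 1" for x y
    using pd1_pd2_eqI[OF Fpot_has_derivative] that assms(1) by auto
  have "pd1 (pd1 (Fpot \<beta> r)) a b = dGfun \<beta> a + dGfun \<beta> (1 - a - b)"
    unfolding pd1_def[of "pd1 _"]
    by (rule deriv_transform_within_open[OF Fgrad_DERIV(1), where S = "{0<..<1 - b}"])
      (use assms pd in auto)
  moreover have "pd2 (pd1 (Fpot \<beta> r)) a b = dGfun \<beta> (1 - a - b)"
    unfolding pd2_def[of "pd1 _"]
    by (rule deriv_transform_within_open[OF Fgrad_DERIV(2), where S = "{0<..<1 - a}"])
      (use assms pd in auto)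
  moreover have "pd1 (pd2 (Fpot \<beta> r)) a b = dGfun \<beta> (1 - b - a)"
    unfolding pd1_def[of "pd2 _"]
    by (rule deriv_transform_within_open[OF Fgrad_DERIV(2), where S = "{0<..<1 - b}"])
      (use assms pd in auto)
  moreover have "pd2 (pd2 (Fpot \<beta> r)) a b = dGfun \<beta> b + dGfun \<beta> (1 - b - a)"
    unfolding pd2_def[of "pd2 _"]
    by (rule deriv_transform_within_open[OF Fgrad_DERIV(1), where S = "{0<..<1 - a}"])
      (use assms pd in auto)
  ultimately show "hess (Fpot \<beta> r) a b 1 1 = dGfun \<beta> a + dGfun \<beta> (1 - a - b)"
    and "hess (Fpot \<beta> r) a b 1 2 = dGfun \<beta> (1 - a - b)"
    and "hess (Fpot \<beta> r) a b 2 1 = dGfun \<beta> (1 - a - b)"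
    and "hess (Fpot \<beta> r) a b 2 2 = dGfun \<beta> b + dGfun \<beta> (1 - a - b)"
    unfolding hess_def by (simp_all add: diff_diff_eq add.commute)
qed

section \<open>The saddle point\<close>

lemma eigen2_if_char_root:
  assumes "(M 1 1 - lam) * (M 2 2 - lam) = M 1 2 * M 2 1"
  shows "eigen2 M lam"
proof -
  consider "M 1 2 \<noteq> 0" | "M 1 2 = 0" "M 2 2 = lam" | "M 1 2 = 0" "M 1 1 = lam" "M 2 2 \<noteq> lam"
    using assms by (cases "M 1 2 = 0"; cases "M 2 2 = lam") auto
  then show ?thesis
  proof cases
    case 1
    show ?thesis
      unfolding eigen2_def using 1 assms
      by (rule_tac exI[of _ "M 1 2"], rule_tac exI[of _ "lam - M 1 1"]) (auto simp: algebra_simps)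
  next
    case 2
    then show ?thesis
      unfolding eigen2_def by (rule_tac exI[of _ 0], rule_tac exI[of _ 1]) auto
  next
    case 3
    then show ?thesis
      unfolding eigen2_def
      by (rule_tac exI[of _ "lam - M 2 2"], rule_tac exI[of _ "M 2 1"]) (auto simp: algebra_simps)
  qed
qed

text \<open>The characteristic polynomial has the roots \<open>(tr \<plusminus> sqrt (tr^2 - 4 det)) / 2\<close>,
  whose product \<open>det\<close> is negative.\<close>
lemma eigen2_opposite_signs_if_det_neg:
  assumes "M 1 1 * M 2 2 - M 1 2 * M 2 1 < 0"
  shows "\<exists>lam1 lam2. lam1 > 0 \<and> lam2 < 0 \<and> eigen2 M lam1 \<and> eigen2 M lam2"
proof -
  define t d where "t = M 1 1 + M 2 2" and "d = M 1 1 * M 2 2 - M 1 2 * M 2 1"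
  define D where "D = sqrt (t^2 - 4 * d)"
  have "d < 0"
    using assms unfolding d_def .
  then have "0 \<le> t^2 - 4 * d"
    using zero_le_power2[of t] by linarith
  then have D2: "D^2 = t^2 - 4 * d"
    unfolding D_def by simp
  have D: "\<bar>t\<bar> < D"
    using assms unfolding D_def d_def by (intro real_less_rsqrt) (simp add: power2_eq_square)
  have E: "eigen2 M ((t + s * D) / 2)" if "s = 1 \<or> s = -1" for s
  proof (rule eigen2_if_char_root)
    have "s^2 = 1"
      using that by auto
    then show "(M 1 1 - (t + s * D) / 2) * (M 2 2 - (t + s * D) / 2) = M 1 2 * M 2 1"
      using D2 unfolding t_def d_def by (simp add: power2_eq_square field_simps)
  qed
  have "eigen2 M ((t + D) / 2)" "eigen2 M ((t - D) / 2)"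
    using E[of 1] E[of "-1"] by simp_all
  moreover have "(t + D) / 2 > 0" "(t - D) / 2 < 0"
    using D by auto
  ultimately show ?thesis
    by blast
qed

lemma saddle_pt_FpotI:
  assumes "\<beta> > 0" "0 < a" "0 < b" "a + b < 1" "Fgrad \<beta> r a b = 0" "Fgrad \<beta> r b a = 0"
    and "dGfun \<beta> a * dGfun \<beta> b + dGfun \<beta> (1 - a - b) * (dGfun \<beta> a + dGfun \<beta> b) < 0"
  shows "saddle_pt \<beta> r a b"
proof -
  have "critical_pt (Fpot \<beta> r) a b"
    using Fpot_has_derivative[OF assms(1-4), of r] assms(5,6) unfolding critical_pt_def by simp
  moreover have "hess (Fpot \<beta> r) a b 1 1 * hess (Fpot \<beta> r) a b 2 2
      - hess (Fpot \<beta> r) a b 1 2 * hess (Fpot \<beta> r) a b 2 1 < 0"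
    using assms(7) unfolding hess_Fpot[OF assms(1-4)] by (simp add: algebra_simps)
  ultimately show ?thesis
    unfolding saddle_pt_def using assms(2-4) eigen2_opposite_signs_if_det_neg by blast
qed

lemma saddle_pt_Hb_Kb:
  assumes "\<beta> > 2" "r \<ge> 0" "eq_y1 \<beta> r y" "y < gb \<beta>"
  shows "saddle_pt \<beta> r (Hb \<beta> y) (Kb \<beta> y)"
proof -
  define h k x0 where "h = Hb \<beta> y" and "k = Kb \<beta> y" and "x0 = Kb \<beta> (y - 3*r/2)"
  have y': "y - 3*r/2 < gb \<beta>"
    using assms by simp
  have x0: "1 - h - k = x0" "1 - k - h = x0"
    using assms(3) unfolding eq_y1_def h_def k_def x0_def by simp_all
  have G: "Gfun \<beta> h = y" "Gfun \<beta> k = y" "Gfun \<beta> x0 = y - 3*r/2"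
    using Hb_spec[of \<beta> y] Kb_spec[of \<beta> y] Kb_spec[of \<beta> "y - 3*r/2"] assms y'
    unfolding h_def k_def x0_def by auto
  have pos: "0 < h" "h < lb \<beta>" "lb \<beta> < k" "lb \<beta> < x0" "0 < lb \<beta>"
    using Hb_spec[of \<beta> y] Hb_Kb_less_gb[OF assms(1,4)] Hb_Kb_less_gb[OF assms(1) y'] lb_bounds[OF assms(1)]
      assms unfolding h_def k_def x0_def by auto
  have "0 < dGfun \<beta> h" "dGfun \<beta> k < 0" "dGfun \<beta> x0 < 0"
    using pos assms(1) dGfun_pos_iff[of \<beta>] dGfun_neg_iff[of \<beta>] by auto
  moreover have "0 < dGfun \<beta> h + dGfun \<beta> k"
    using dGfun_Hb_plus_dGfun_Kb_pos[OF assms(1,4)] unfolding h_def k_def .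
  ultimately have det: "dGfun \<beta> h * dGfun \<beta> k + dGfun \<beta> (1 - h - k) * (dGfun \<beta> h + dGfun \<beta> k) < 0"
    unfolding x0(1) by (smt (verit) mult_pos_neg mult_neg_pos)
  have crit: "Fgrad \<beta> r h k = 0" "Fgrad \<beta> r k h = 0"
    using G unfolding Fgrad_def x0 by simp_all
  have "0 < \<beta>" "0 < k" "h + k < 1"
    using assms(1) pos x0(1) by linarith+
  then show ?thesis
    unfolding h_def[symmetric] k_def[symmetric] using pos(1) crit det by (intro saddle_pt_FpotI)
qed

theorem lemma5p7:
  fixes \<beta> r :: real
  assumes "\<beta> > 2" and "r > 0"
  shows "(r \<le> r1 \<beta> \<longrightarrow> (\<exists>!y. eq_y1 \<beta> r y))
       \<and> (r > r1 \<beta> \<longrightarrow> \<not> (\<exists>y. eq_y1 \<beta> r y))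
       \<and> (r < r1 \<beta> \<longrightarrow> saddle_pt \<beta> r (Hb \<beta> (y1 \<beta> r)) (Kb \<beta> (y1 \<beta> r)))"
proof -
  have r: "r \<ge> 0"
    using assms(2) by simp
  have "r \<le> r1 \<beta> \<Longrightarrow> \<exists>!y. eq_y1 \<beta> r y"
    using eq_y1_exists_iff[OF assms(1) r] eq_y1_unique[OF assms(1) r] by blast
  moreover have "r > r1 \<beta> \<Longrightarrow> \<not> (\<exists>y. eq_y1 \<beta> r y)"
    using eq_y1_exists_iff[OF assms(1) r] by simp
  moreover have "r < r1 \<beta> \<Longrightarrow> saddle_pt \<beta> r (Hb \<beta> (y1 \<beta> r)) (Kb \<beta> (y1 \<beta> r))"
    using saddle_pt_Hb_Kb[OF assms(1) r] y1_spec[OF assms(1) r] by blast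
  ultimately show ?thesis
    by blast
qed

end
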